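(* Assume $\mathbf{P.0}$ has an optimal solution, with optimal value $OPT$. Let $A^g$ be the output of the greedy algorithm on the family $\mathcal{I}$. Then $|A^g|\le b$, $\lfloor\alpha_t\rfloor\le |A^g\cap V_t|\le\lceil\beta_t\rceil$ for all $t\in[m]$, and $$f(A^g)\ge \frac{(1-1/e)^2}{2}\,OPT.$$
   Context: Let $V$ be a finite set of $n$ items and $f:2^V\to\mathbb{R}_{\ge 0}$ a non-negative monotone submodular function. Items are divided into pairwise disjoint groups $V_1,\dots,V_m$ with $V=V_1\cup\dots\cup V_m$; $\alpha,\beta\in\mathbb{R}_{\ge 0}^m$ and $b$ is a positive integer. Let $\mathcal{F}=\{S\subseteq V: |S|\le b\}$. Problem $\mathbf{P.0}$: maximize $\sum_{S\in\mathcal{F}} x_S f(S)$ over $x\in[0,1]^{\mathcal{F}}$ subject to $\alpha_t\le \sum_{S\in\mathcal{F}} x_S |S\cap V_t|\le \beta_t$ for all $t\in[m]$ and $\sum_{S\in\mathcal{F}}x_S\le 1$; $OPT$ denotes its optimal value. Let $\mathcal{I}$ be the family of sets $S\subseteq V$ such that $|S\cap V_t|\le\lceil\beta_t\rceil$ for all $t\in[m]$ and $\sum_{t\in[m]}\max\{\lfloor\alpha_t\rfloor,|S\cap V_t|\}\le b$ (this family is the set of feasible solutions of problem $\mathbf{P.3}$: maximize $f(S)$ over $S\in\mathcal{I}$). The greedy algorithm on $\mathcal{I}$: start with $S=\emptyset$; while there exists $e\in V\setminus S$ with $S\cup\{e\}\in\mathcal{I}$, add to $S$ such an $e$ maximizing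 $f(S\cup\{e\})-f(S)$ (ties broken arbitrarily); when no such $e$ exists, output $A^g=S$. *)

theory Defs
  imports Complex_Main
begin

definition monotone_set_fun :: "'a set \<Rightarrow> ('a set \<Rightarrow> real) \<Rightarrow> bool" where
  "monotone_set_fun V f \<longleftrightarrow> (\<forall>A B. A \<subseteq> B \<and> B \<subseteq> V \<longrightarrow> f A \<le> f B)"

definition submodular :: "'a set \<Rightarrow> ('a set \<Rightarrow> real) \<Rightarrow> bool" where
  "submodular V f \<longleftrightarrow> (\<forall>A B. A \<subseteq> V \<and> B \<subseteq> V \<longrightarrow> f (A \<union> B) + f (A \<inter> B) \<le> f A + f B)"

text \<open>Groups are indexed by t in {0..<m} (i.e. [m] shifted to start at 0).\<close>

definition famF :: "'a set \<Rightarrow> nat \<Rightarrow> 'a set set" where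
  "famF V b = {S. S \<subseteq> V \<and> card S \<le> b}"

definition lp_feasible ::
  "'a set \<Rightarrow> nat \<Rightarrow> (nat \<Rightarrow> 'a set) \<Rightarrow> (nat \<Rightarrow> real) \<Rightarrow> (nat \<Rightarrow> real) \<Rightarrow> nat
   \<Rightarrow> ('a set \<Rightarrow> real) \<Rightarrow> bool" where
  "lp_feasible V m Vg \<alpha> \<beta> b x \<longleftrightarrow>
     (\<forall>S\<in>famF V b. 0 \<le> x S \<and> x S \<le> 1) \<and>
     (\<forall>t<m. \<alpha> t \<le> (\<Sum>S\<in>famF V b. x S * real (card (S \<inter> Vg t))) \<and>
            (\<Sum>S\<in>famF V b. x S * real (card (S \<inter> Vg t))) \<le> \<beta> t) \<and>
     (\<Sum>S\<in>famF V b. x S) \<le> 1"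

definition lp_obj :: "'a set \<Rightarrow> nat \<Rightarrow> ('a set \<Rightarrow> real) \<Rightarrow> ('a set \<Rightarrow> real) \<Rightarrow> real" where
  "lp_obj V b f x = (\<Sum>S\<in>famF V b. x S * f S)"

definition famI ::
  "'a set \<Rightarrow> nat \<Rightarrow> (nat \<Rightarrow> 'a set) \<Rightarrow> (nat \<Rightarrow> real) \<Rightarrow> (nat \<Rightarrow> real) \<Rightarrow> nat \<Rightarrow> 'a set set" where
  "famI V m Vg \<alpha> \<beta> b = {S. S \<subseteq> V \<and>
     (\<forall>t<m. card (S \<inter> Vg t) \<le> nat \<lceil>\<beta> t\<rceil>) \<and>
     (\<Sum>t<m. max (nat \<lfloor>\<alpha> t\<rfloor>) (card (S \<inter> Vg t))) \<le> b}"

inductive greedy_reach :: "'a set \<Rightarrow> 'a set set \<Rightarrow> ('a set \<Rightarrow> real) \<Rightarrow> 'a set \<Rightarrow> bool"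
  for V :: "'a set" and \<I> :: "'a set set" and f :: "'a set \<Rightarrow> real" where
  start: "greedy_reach V \<I> f {}"
| step: "\<lbrakk> greedy_reach V \<I> f S; e \<in> V - S; insert e S \<in> \<I>;
           \<forall>e'\<in>V - S. insert e' S \<in> \<I> \<longrightarrow> f (insert e' S) - f S \<le> f (insert e S) - f S \<rbrakk>
          \<Longrightarrow> greedy_reach V \<I> f (insert e S)"

definition greedy_output :: "'a set \<Rightarrow> 'a set set \<Rightarrow> ('a set \<Rightarrow> real) \<Rightarrow> 'a set \<Rightarrow> bool" where
  "greedy_output V \<I> f A \<longleftrightarrow> greedy_reach V \<I> f A \<and> \<not> (\<exists>e\<in>V - A. insert e A \<in> \<I>)"

end

theory Submission
  imports Defs
begin

text \<open>Let y be the element marginals of the LP solution (feasibility suffices). Then y is a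
  fractional point of the group constraints, and for every feasible set A the y-mass of the
  elements that cannot be added to A is at most |A|: such an element lies in a group at its upper
  bound, or the budget is exhausted, and in either case those groups carry no more y-mass than A
  has elements there. A potential argument along the greedy run turns this into
  \<open>\<Sum>e. y e * (f (A + e) - f A) \<le> f A - f {}\<close> for the greedy output A, while submodularity
  gives \<open>OPT \<le> f A + \<Sum>e. y e * (f (A + e) - f A)\<close>. Hence OPT \<le> 2 f A, which is stronger
  than the factor (1 - 1/e)^2/2.\<close>

section \<open>Submodular set functions\<close>

abbreviation gain :: "('a set \<Rightarrow> real) \<Rightarrow> 'a set \<Rightarrow> 'a \<Rightarrow> real" where
  "gain f S e \<equiv> f (insert e S) - f S"

lemma monotone_set_funD: "monotone_set_fun V f \<Longrightarrow> A \<subseteq> B \<Longrightarrow> B \<subseteq> V \<Longrightarrow> f A \<le> f B"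
  unfolding monotone_set_fun_def by blast

lemma gain_nonneg: "monotone_set_fun V f \<Longrightarrow> S \<subseteq> V \<Longrightarrow> e \<in> V \<Longrightarrow> 0 \<le> gain f S e"
  using monotone_set_funD[of V f S "insert e S"] by auto

lemma submodular_gain_antimono:
  assumes mono: "monotone_set_fun V f" and submod: "submodular V f"
    and "S \<subseteq> T" "T \<subseteq> V" "e \<in> V"
  shows "gain f T e \<le> gain f S e"
proof (cases "e \<in> T")
  case True
  then show ?thesis using gain_nonneg[OF mono, of S e] assms by (simp add: insert_absorb)
next
  case False
  have "insert e S \<union> T = insert e T" "insert e S \<inter> T = S"
    using assms False by auto
  moreover have "f (insert e S \<union> T) + f (insert e S \<inter> T) \<le> f (insert e S) + f T"
    using submod assms unfolding submodular_def by (meson insert_subset subset_trans)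
  ultimately show ?thesis by simp
qed

lemma submodular_le_add_sum_gain:
  assumes mono: "monotone_set_fun V f" and submod: "submodular V f"
    and "finite V" "A \<subseteq> V" "S \<subseteq> V"
  shows "f S \<le> f A + (\<Sum>e\<in>S. gain f A e)"
proof -
  have "f (S \<union> A) \<le> f A + (\<Sum>e\<in>S. gain f A e)"
    using finite_subset[OF \<open>S \<subseteq> V\<close> \<open>finite V\<close>] \<open>S \<subseteq> V\<close>
  proof (induction S rule: finite_induct)
    case (insert e S)
    have "gain f (S \<union> A) e \<le> gain f A e"
      using submodular_gain_antimono[OF mono submod, of A "S \<union> A" e] insert.prems \<open>A \<subseteq> V\<close> by auto
    with insert show ?case by simp
  qed simp
  moreover have "f S \<le> f (S \<union> A)"
    using monotone_set_funD[OF mono] assms by blast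
  ultimately show ?thesis by linarith
qed

definition marginal :: "'a set set \<Rightarrow> ('a set \<Rightarrow> real) \<Rightarrow> 'a \<Rightarrow> real" where
  "marginal F x e = (\<Sum>S\<in>{S\<in>F. e \<in> S}. x S)"

lemma sum_marginal_mult:
  assumes "finite F" "finite W"
  shows "(\<Sum>e\<in>W. marginal F x e * g e) = (\<Sum>S\<in>F. x S * (\<Sum>e\<in>S \<inter> W. g e))"
proof -
  have "(\<Sum>e\<in>W. marginal F x e * g e) = (\<Sum>e\<in>W. \<Sum>S\<in>{S\<in>F. e \<in> S}. x S * g e)"
    unfolding marginal_def by (simp add: sum_distrib_right)
  also have "\<dots> = (\<Sum>S\<in>F. \<Sum>e\<in>{e\<in>W. e \<in> S}. x S * g e)"
    using sum.swap_restrict[OF assms(2,1)] by simp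
  also have "\<dots> = (\<Sum>S\<in>F. x S * (\<Sum>e\<in>S \<inter> W. g e))"
    by (simp add: sum_distrib_left Int_def conj_commute)
  finally show ?thesis .
qed

lemma sum_marginal:
  "finite F \<Longrightarrow> finite W \<Longrightarrow> sum (marginal F x) W = (\<Sum>S\<in>F. x S * real (card (S \<inter> W)))"
  using sum_marginal_mult[of F W x "\<lambda>_. 1"] by simp

lemma marginal_le_sum: "(\<And>S. S \<in> F \<Longrightarrow> 0 \<le> x S) \<Longrightarrow> finite F \<Longrightarrow> marginal F x e \<le> sum x F"
  unfolding marginal_def by (rule sum_mono2) auto

lemma weighted_sum_le_add_marginal_gain:
  assumes mono: "monotone_set_fun V f" and submod: "submodular V f"
    and finV: "finite V" and F: "F \<subseteq> Pow V" and x_nonneg: "\<And>S. S \<in> F \<Longrightarrow> 0 \<le> x S"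
    and A: "A \<subseteq> V"
  shows "(\<Sum>S\<in>F. x S * f S) \<le> sum x F * f A + (\<Sum>e\<in>V. marginal F x e * gain f A e)"
proof -
  have finF: "finite F" using F finV by (meson finite_Pow_iff finite_subset)
  have "(\<Sum>S\<in>F. x S * f S) \<le> (\<Sum>S\<in>F. x S * (f A + (\<Sum>e\<in>S. gain f A e)))"
    using submodular_le_add_sum_gain[OF mono submod finV A] F x_nonneg
    by (intro sum_mono mult_left_mono) auto
  also have "\<dots> = sum x F * f A + (\<Sum>S\<in>F. x S * (\<Sum>e\<in>S. gain f A e))"
    by (simp add: distrib_left sum.distrib sum_distrib_right)
  also have "\<dots> = sum x F * f A + (\<Sum>S\<in>F. x S * (\<Sum>e\<in>S \<inter> V. gain f A e))"
    using F by (auto simp: Int_absorb2 intro!: sum.cong)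
  also have "\<dots> = sum x F * f A + (\<Sum>e\<in>V. marginal F x e * gain f A e)"
    using sum_marginal_mult[OF finF finV] by simp
  finally show ?thesis .
qed

section \<open>Greedy on a down-closed family\<close>

definition blocked :: "'a set \<Rightarrow> 'a set set \<Rightarrow> 'a set \<Rightarrow> 'a set" where
  "blocked V I S = {e \<in> V - S. insert e S \<notin> I}"

lemma greedy_reach_subset: "greedy_reach V I f S \<Longrightarrow> S \<subseteq> V"
  by (induction rule: greedy_reach.induct) auto

lemma greedy_reach_in: "greedy_reach V I f S \<Longrightarrow> {} \<in> I \<Longrightarrow> S \<in> I"
  by (induction rule: greedy_reach.induct) auto

context
  fixes V :: "'a set" and I :: "'a set set" and f :: "'a set \<Rightarrow> real" and y :: "'a \<Rightarrow> real"
  assumes finite_V: "finite V"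
    and down_closed: "\<And>S T. S \<in> I \<Longrightarrow> T \<subseteq> S \<Longrightarrow> T \<in> I"
    and empty_in: "{} \<in> I"
    and mono: "monotone_set_fun V f"
    and submod: "submodular V f"
    and y_nonneg: "\<And>e. e \<in> V \<Longrightarrow> 0 \<le> y e"
    and sum_blocked_le_card: "\<And>A. A \<in> I \<Longrightarrow> sum y (blocked V I A) \<le> real (card A)"
begin

lemma finite_blocked: "finite (blocked V I S)"
  using finite_V unfolding blocked_def by simp

lemma blocked_subset_blocked_insert:
  assumes "insert a S \<in> I"
  shows "blocked V I S \<subseteq> blocked V I (insert a S)"
proof
  fix e assume e: "e \<in> blocked V I S"
  then have "e \<noteq> a" using assms unfolding blocked_def by auto
  moreover have "insert e (insert a S) \<notin> I"
    using e down_closed[of "insert e (insert a S)" "insert e S"] unfolding blocked_def by auto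
  ultimately show "e \<in> blocked V I (insert a S)" using e unfolding blocked_def by auto
qed

lemma gain_insert_le_greedy_gain:
  assumes S: "S \<subseteq> V" and a: "a \<in> V - S"
    and greedy: "\<forall>e\<in>V - S. insert e S \<in> I \<longrightarrow> gain f S e \<le> gain f S a"
    and e: "e \<in> V - S" "insert e S \<in> I"
  shows "gain f (insert a S) e \<le> gain f S a"
proof -
  have "gain f (insert a S) e \<le> gain f S e"
    using submodular_gain_antimono[OF mono submod, of S "insert a S" e] S a e by auto
  also have "\<dots> \<le> gain f S a" using greedy e by blast
  finally show ?thesis .
qed

text \<open>Newly blocked elements were feasible extensions before the step, so their gain is bounded
  by the greedy gain.\<close>
lemma sum_blocked_gain_insert_le:
  assumes S: "S \<subseteq> V" and a: "a \<in> V - S" "insert a S \<in> I"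
    and greedy: "\<forall>e\<in>V - S. insert e S \<in> I \<longrightarrow> gain f S e \<le> gain f S a"
  shows "(\<Sum>e\<in>blocked V I (insert a S). y e * gain f (insert a S) e)
    \<le> (\<Sum>e\<in>blocked V I S. y e * gain f S e)
       + sum y (blocked V I (insert a S) - blocked V I S) * gain f S a"
proof -
  let ?B = "blocked V I S" and ?B' = "blocked V I (insert a S)"
  have "(\<Sum>e\<in>?B'. y e * gain f (insert a S) e)
      = (\<Sum>e\<in>?B. y e * gain f (insert a S) e) + (\<Sum>e\<in>?B' - ?B. y e * gain f (insert a S) e)"
    using sum.subset_diff[OF blocked_subset_blocked_insert[OF a(2)] finite_blocked,
        of "\<lambda>e. y e * gain f (insert a S) e"] by linarith
  also have "(\<Sum>e\<in>?B. y e * gain f (insert a S) e) \<le> (\<Sum>e\<in>?B. y e * gain f S e)"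
    using submodular_gain_antimono[OF mono submod, of S "insert a S"] S a y_nonneg
    unfolding blocked_def by (intro sum_mono mult_left_mono) auto
  also have "(\<Sum>e\<in>?B' - ?B. y e * gain f (insert a S) e) \<le> (\<Sum>e\<in>?B' - ?B. y e * gain f S a)"
    using gain_insert_le_greedy_gain[OF S a(1) greedy] y_nonneg
    unfolding blocked_def by (intro sum_mono mult_left_mono) auto
  finally show ?thesis by (simp add: sum_distrib_right)
qed

text \<open>The potential argument behind the greedy bound: the parameter h is a lower bound for the
  next greedy gain, so the slack in the blocked-mass bound can be charged to it.\<close>
lemma greedy_reach_blocked_gain:
  assumes "greedy_reach V I f S"
    and "h \<le> 0 \<or> (\<exists>e\<in>V - S. insert e S \<in> I \<and> h \<le> gain f S e)"
  shows "(\<Sum>e\<in>blocked V I S. y e * gain f S e) + (real (card S) - sum y (blocked V I S)) * h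
    \<le> f S - f {}"
  using assms
proof (induction arbitrary: h rule: greedy_reach.induct)
  case start
  have "sum y (blocked V I {}) = 0"
    using sum_blocked_le_card[OF empty_in] y_nonneg sum_nonneg[of "blocked V I {}" y]
    unfolding blocked_def by fastforce
  then have "\<forall>e\<in>blocked V I {}. y e = 0"
    using sum_nonneg_eq_0_iff[OF finite_blocked] y_nonneg unfolding blocked_def by blast
  then show ?case using \<open>sum y (blocked V I {}) = 0\<close> by simp
next
  case (step S a)
  let ?S' = "insert a S" and ?B = "blocked V I S" and ?B' = "blocked V I (insert a S)"
  define g where "g = gain f S a"
  have S: "S \<subseteq> V" using greedy_reach_subset[OF step.hyps(1)] .
  have "0 \<le> g" unfolding g_def using gain_nonneg[OF mono S] step.hyps by auto
  then have IH: "(\<Sum>e\<in>?B. y e * gain f S e) + (real (card S) - sum y ?B) * g \<le> f S - f {}"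
    using step.IH step.hyps unfolding g_def by blast
  have "h \<le> g"
    using step.prems
  proof
    assume "\<exists>e\<in>V - ?S'. insert e ?S' \<in> I \<and> h \<le> gain f ?S' e"
    then obtain e where e: "e \<in> V - ?S'" "insert e ?S' \<in> I" "h \<le> gain f ?S' e" by blast
    have "insert e S \<in> I" using down_closed[OF e(2)] by auto
    with e gain_insert_le_greedy_gain[OF S step.hyps(2,4)] show ?thesis
      unfolding g_def by fastforce
  qed (use \<open>0 \<le> g\<close> in linarith)
  moreover have "sum y ?B' \<le> real (card S) + 1"
    using sum_blocked_le_card[OF step.hyps(3)] S finite_subset[OF S finite_V] step.hyps by simp
  ultimately have slack: "(g - h) * (sum y ?B' - (real (card S) + 1)) \<le> 0"
    by (intro mult_nonneg_nonpos) auto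
  have sum_B': "sum y ?B' = sum y ?B + sum y (?B' - ?B)"
    using sum.subset_diff[OF blocked_subset_blocked_insert[OF step.hyps(3)] finite_blocked, of y]
    by linarith
  have card_S': "real (card ?S') = real (card S) + 1"
    using finite_subset[OF S finite_V] step.hyps by simp
  have "(\<Sum>e\<in>?B'. y e * gain f ?S' e) + (real (card ?S') - sum y ?B') * h
    \<le> (\<Sum>e\<in>?B. y e * gain f S e) + (real (card S) - sum y ?B) * g + g
       + (g - h) * (sum y ?B' - (real (card S) + 1))"
    using sum_blocked_gain_insert_le[OF S _ step.hyps(3,4)] step.hyps(2) sum_B' card_S'
    unfolding g_def by (simp add: algebra_simps)
  also have "\<dots> \<le> f ?S' - f {}"
    using IH slack unfolding g_def by linarith
  finally show ?case .
qed

lemma greedy_output_sum_gain_le: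
  assumes "greedy_output V I f A"
  shows "(\<Sum>e\<in>V. y e * gain f A e) \<le> f A - f {}"
proof -
  have reach: "greedy_reach V I f A" and maximal: "\<forall>e\<in>V - A. insert e A \<notin> I"
    using assms unfolding greedy_output_def by auto
  have "(\<Sum>e\<in>V. y e * gain f A e) = (\<Sum>e\<in>blocked V I A. y e * gain f A e)"
    using maximal finite_V by (intro sum.mono_neutral_right) (auto simp: blocked_def insert_absorb)
  also have "\<dots> \<le> f A - f {}"
    using greedy_reach_blocked_gain[OF reach, of 0] by simp
  finally show ?thesis .
qed

end

section \<open>Group constraints\<close>

locale group_constraints =
  fixes V :: "'a set" and m :: nat and Vg :: "nat \<Rightarrow> 'a set"
    and \<alpha> \<beta> :: "nat \<Rightarrow> real" and b :: nat
  assumes finite_V: "finite V"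
    and groups_disjoint: "\<forall>s<m. \<forall>t<m. s \<noteq> t \<longrightarrow> Vg s \<inter> Vg t = {}"
    and groups_cover: "(\<Union>t<m. Vg t) = V"
    and alpha_nonneg: "\<forall>t<m. 0 \<le> \<alpha> t"
    and beta_nonneg: "\<forall>t<m. 0 \<le> \<beta> t"
begin

abbreviation "I \<equiv> famI V m Vg \<alpha> \<beta> b"

definition lo :: "nat \<Rightarrow> nat" where "lo t = nat \<lfloor>\<alpha> t\<rfloor>"
definition hi :: "nat \<Rightarrow> nat" where "hi t = nat \<lceil>\<beta> t\<rceil>"

lemma Vg_subset: "t < m \<Longrightarrow> Vg t \<subseteq> V"
  using groups_cover by auto

lemma finite_Vg: "t < m \<Longrightarrow> finite (Vg t)"
  using Vg_subset finite_V finite_subset by blast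

lemma real_lo: "t < m \<Longrightarrow> real (lo t) = real_of_int \<lfloor>\<alpha> t\<rfloor>"
  using alpha_nonneg unfolding lo_def by simp

lemma real_hi: "t < m \<Longrightarrow> real (hi t) = real_of_int \<lceil>\<beta> t\<rceil>"
  using beta_nonneg unfolding hi_def by simp

lemma sum_UN_groups:
  assumes "T \<subseteq> {..<m}"
  shows "sum g (\<Union>t\<in>T. Vg t) = (\<Sum>t\<in>T. sum g (Vg t))"
proof (rule sum.UNION_disjoint)
  show "finite T" using assms finite_subset by blast
  show "\<forall>t\<in>T. finite (Vg t)" using assms finite_Vg by blast
  show "\<forall>s\<in>T. \<forall>t\<in>T. s \<noteq> t \<longrightarrow> Vg s \<inter> Vg t = {}" using assms groups_disjoint by blast
qed

lemma sum_eq_sum_groups: "sum g V = (\<Sum>t<m. sum g (Vg t))"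
  using sum_UN_groups[of "{..<m}" g] groups_cover by simp

lemma card_eq_sum_card_groups:
  assumes "A \<subseteq> V"
  shows "card A = (\<Sum>t<m. card (A \<inter> Vg t))"
proof -
  have "A = (\<Union>t<m. A \<inter> Vg t)" using assms groups_cover by auto
  then have "card A = card (\<Union>t<m. A \<inter> Vg t)" by simp
  also have "\<dots> = (\<Sum>t<m. card (A \<inter> Vg t))"
    by (rule card_UN_disjoint) (use finite_Vg groups_disjoint in auto)
  finally show ?thesis .
qed

lemma famI_iff:
  "A \<in> I \<longleftrightarrow> A \<subseteq> V \<and> (\<forall>t<m. card (A \<inter> Vg t) \<le> hi t)
     \<and> (\<Sum>t<m. max (lo t) (card (A \<inter> Vg t))) \<le> b"
  unfolding famI_def lo_def hi_def by simp

lemma famI_card_le: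
  assumes "A \<in> I"
  shows "card A \<le> b"
proof -
  have "card A = (\<Sum>t<m. card (A \<inter> Vg t))"
    using assms card_eq_sum_card_groups unfolding famI_iff by blast
  also have "\<dots> \<le> (\<Sum>t<m. max (lo t) (card (A \<inter> Vg t)))" by (intro sum_mono) simp
  also have "\<dots> \<le> b" using assms unfolding famI_iff by simp
  finally show ?thesis .
qed

lemma famI_down_closed:
  assumes "A \<in> I" "B \<subseteq> A"
  shows "B \<in> I"
proof -
  have "finite A" using assms finite_V finite_subset unfolding famI_iff by blast
  then have "card (B \<inter> Vg t) \<le> card (A \<inter> Vg t)" for t
    using assms(2) by (intro card_mono) auto
  then have "(\<Sum>t<m. max (lo t) (card (B \<inter> Vg t))) \<le> (\<Sum>t<m. max (lo t) (card (A \<inter> Vg t)))"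
    by (intro sum_mono max.mono) auto
  with assms \<open>\<And>t. card (B \<inter> Vg t) \<le> card (A \<inter> Vg t)\<close> show ?thesis
    unfolding famI_iff by (meson order_trans subset_trans)
qed

lemma card_insert_Int_group:
  assumes "A \<subseteq> V" "e \<in> Vg t" "e \<notin> A" "t < m" "s < m"
  shows "card (insert e A \<inter> Vg s) = card (A \<inter> Vg s) + (if s = t then 1 else 0)"
proof (cases "s = t")
  case True
  then have "insert e A \<inter> Vg s = insert e (A \<inter> Vg s)" using assms by auto
  then show ?thesis using True assms finite_Vg by simp
next
  case False
  then have "insert e A \<inter> Vg s = A \<inter> Vg s" using groups_disjoint assms by blast
  then show ?thesis using False by simp
qed

lemma sum_max_card_insert:
  assumes "A \<subseteq> V" "e \<in> Vg t" "e \<notin> A" "t < m"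
  shows "(\<Sum>s<m. max (lo s) (card (insert e A \<inter> Vg s)))
    = (\<Sum>s<m. max (lo s) (card (A \<inter> Vg s))) + (if card (A \<inter> Vg t) < lo t then 0 else 1)"
proof -
  have "(\<Sum>s<m. max (lo s) (card (insert e A \<inter> Vg s)))
      = (\<Sum>s<m. max (lo s) (card (A \<inter> Vg s)) + (if s = t \<and> \<not> card (A \<inter> Vg t) < lo t then 1 else 0))"
    using card_insert_Int_group[OF assms(1-4)] by (intro sum.cong) auto
  then show ?thesis using assms(4) by (simp add: sum.distrib)
qed

lemma insert_in_famI_iff:
  assumes "A \<in> I" "e \<in> Vg t" "e \<notin> A" "t < m"
  shows "insert e A \<in> I \<longleftrightarrow> card (A \<inter> Vg t) < hi t
    \<and> (card (A \<inter> Vg t) < lo t \<or> (\<Sum>s<m. max (lo s) (card (A \<inter> Vg s))) < b)"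
  using assms sum_max_card_insert[of A e t] card_insert_Int_group[of A e t] Vg_subset[of t]
  unfolding famI_iff by (auto split: if_splits)

end

locale fractional_solution = group_constraints +
  fixes y :: "'a \<Rightarrow> real"
  assumes y_nonneg: "\<And>e. e \<in> V \<Longrightarrow> 0 \<le> y e"
    and y_le_one: "\<And>e. e \<in> V \<Longrightarrow> y e \<le> 1"
    and sum_group_lower: "\<And>t. t < m \<Longrightarrow> \<alpha> t \<le> sum y (Vg t)"
    and sum_group_upper: "\<And>t. t < m \<Longrightarrow> sum y (Vg t) \<le> \<beta> t"
    and sum_le_budget: "sum y V \<le> real b"
begin

lemma lo_le_sum_group: "t < m \<Longrightarrow> real (lo t) \<le> sum y (Vg t)"
  using real_lo[of t] sum_group_lower[of t] of_int_floor_le[of "\<alpha> t"] by linarith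

lemma sum_group_le_hi: "t < m \<Longrightarrow> sum y (Vg t) \<le> real (hi t)"
  using real_hi[of t] sum_group_upper[of t] le_of_int_ceiling[of "\<beta> t"] by linarith

lemma lo_le_hi: "t < m \<Longrightarrow> lo t \<le> hi t"
  using lo_le_sum_group sum_group_le_hi by force

lemma lo_le_card_group: "t < m \<Longrightarrow> lo t \<le> card (Vg t)"
proof -
  assume t: "t < m"
  have "sum y (Vg t) \<le> (\<Sum>e\<in>Vg t. 1)"
    using y_le_one Vg_subset[OF t] by (intro sum_mono) auto
  then show ?thesis using lo_le_sum_group[OF t] by simp
qed

lemma empty_in_famI: "{} \<in> I"
proof -
  have "real (\<Sum>t<m. lo t) \<le> (\<Sum>t<m. sum y (Vg t))"
    unfolding of_nat_sum by (intro sum_mono lo_le_sum_group) simp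
  then have "(\<Sum>t<m. lo t) \<le> b"
    using sum_le_budget sum_eq_sum_groups[of y] by linarith
  then show ?thesis unfolding famI_iff by simp
qed

lemma sum_le_sum_groups:
  assumes "T \<subseteq> {..<m}" "W \<subseteq> (\<Union>t\<in>T. Vg t)"
  shows "sum y W \<le> (\<Sum>t\<in>T. sum y (Vg t))"
proof -
  have "(\<Union>t\<in>T. Vg t) \<subseteq> V" using assms(1) Vg_subset by auto
  then have "sum y W \<le> sum y (\<Union>t\<in>T. Vg t)"
    using assms(2) y_nonneg finite_subset[OF _ finite_V] by (intro sum_mono2) auto
  then show ?thesis using sum_UN_groups[OF assms(1), of y] by simp
qed

lemma sum_full_groups_le_card:
  assumes "A \<subseteq> V"
  shows "(\<Sum>t\<in>{t. t < m \<and> card (A \<inter> Vg t) = hi t}. sum y (Vg t)) \<le> real (card A)"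
proof -
  let ?T = "{t. t < m \<and> card (A \<inter> Vg t) = hi t}"
  have "(\<Sum>t\<in>?T. sum y (Vg t)) \<le> (\<Sum>t\<in>?T. real (card (A \<inter> Vg t)))"
    using sum_group_le_hi by (intro sum_mono) auto
  also have "\<dots> \<le> (\<Sum>t<m. real (card (A \<inter> Vg t)))"
    by (intro sum_mono2) auto
  finally show ?thesis
    using card_eq_sum_card_groups[OF assms] by simp
qed

text \<open>Groups where A has fewer than lo t elements are charged lo t \<le> y(V_t) against the
  budget, so when the budget is tight the remaining groups cannot carry more y-mass than A has
  elements there.\<close>
lemma sum_groups_above_lo_le_card:
  assumes "A \<subseteq> V" and tight: "b \<le> (\<Sum>t<m. max (lo t) (card (A \<inter> Vg t)))"
  shows "(\<Sum>t\<in>{t. t < m \<and> lo t \<le> card (A \<inter> Vg t)}. sum y (Vg t)) \<le> real (card A)"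
proof -
  define P where "P = {t. lo t \<le> card (A \<inter> Vg t)}"
  have split: "sum g {..<m} = sum g ({..<m} \<inter> P) + sum g ({..<m} - P)" for g :: "nat \<Rightarrow> real"
    by (rule sum.Int_Diff) simp
  have "(\<Sum>t<m. real (max (lo t) (card (A \<inter> Vg t))))
      = (\<Sum>t\<in>{..<m} \<inter> P. real (card (A \<inter> Vg t))) + (\<Sum>t\<in>{..<m} - P. real (lo t))"
    unfolding split[of "\<lambda>t. real (max (lo t) (card (A \<inter> Vg t)))"] P_def
    by (intro arg_cong2[where f = "(+)"] sum.cong) auto
  moreover have "(\<Sum>t\<in>{..<m} - P. real (lo t)) \<le> (\<Sum>t\<in>{..<m} - P. sum y (Vg t))"
    using lo_le_sum_group by (intro sum_mono) auto
  moreover have "(\<Sum>t<m. sum y (Vg t)) \<le> (\<Sum>t<m. real (max (lo t) (card (A \<inter> Vg t))))"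
    using tight sum_le_budget sum_eq_sum_groups[of y] by (simp flip: of_nat_sum)
  moreover have "(\<Sum>t\<in>{..<m} \<inter> P. real (card (A \<inter> Vg t))) \<le> (\<Sum>t<m. real (card (A \<inter> Vg t)))"
    by (intro sum_mono2) auto
  ultimately have "(\<Sum>t\<in>{..<m} \<inter> P. sum y (Vg t)) \<le> real (card A)"
    using split[of "\<lambda>t. sum y (Vg t)"] card_eq_sum_card_groups[OF assms(1)] by simp
  moreover have "{..<m} \<inter> P = {t. t < m \<and> lo t \<le> card (A \<inter> Vg t)}"
    unfolding P_def by auto
  ultimately show ?thesis by simp
qed

lemma blocked_famI_cases:
  assumes A: "A \<in> I" and e: "e \<in> blocked V I A"
  obtains t where "t < m" "e \<in> Vg t" "lo t \<le> card (A \<inter> Vg t)"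
    "card (A \<inter> Vg t) = hi t \<or> b \<le> (\<Sum>s<m. max (lo s) (card (A \<inter> Vg s)))"
proof -
  obtain t where t: "t < m" "e \<in> Vg t" using e groups_cover unfolding blocked_def by auto
  have e_out: "e \<notin> A" "insert e A \<notin> I" using e unfolding blocked_def by auto
  have "card (A \<inter> Vg t) \<le> hi t" using A t unfolding famI_iff by auto
  moreover have "\<not> (card (A \<inter> Vg t) < hi t \<and>
      (card (A \<inter> Vg t) < lo t \<or> (\<Sum>s<m. max (lo s) (card (A \<inter> Vg s))) < b))"
    using insert_in_famI_iff[OF A t(2) e_out(1) t(1)] e_out(2) by blast
  ultimately show ?thesis using that t lo_le_hi[OF t(1)] by force
qed

lemma sum_blocked_le_card:
  assumes A: "A \<in> I"
  shows "sum y (blocked V I A) \<le> real (card A)"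
proof -
  have AV: "A \<subseteq> V" using A unfolding famI_iff by simp
  show ?thesis
  proof (cases "b \<le> (\<Sum>t<m. max (lo t) (card (A \<inter> Vg t)))")
    case True
    let ?T = "{t. t < m \<and> lo t \<le> card (A \<inter> Vg t)}"
    have "blocked V I A \<subseteq> (\<Union>t\<in>?T. Vg t)"
    proof
      fix e assume "e \<in> blocked V I A"
      then obtain t where "t < m" "e \<in> Vg t" "lo t \<le> card (A \<inter> Vg t)"
        by (rule blocked_famI_cases[OF A])
      then show "e \<in> (\<Union>t\<in>?T. Vg t)" by blast
    qed
    then have "sum y (blocked V I A) \<le> (\<Sum>t\<in>?T. sum y (Vg t))"
      by (intro sum_le_sum_groups) auto
    then show ?thesis using sum_groups_above_lo_le_card[OF AV True] by linarith
  next
    case False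
    let ?T = "{t. t < m \<and> card (A \<inter> Vg t) = hi t}"
    have "blocked V I A \<subseteq> (\<Union>t\<in>?T. Vg t)"
    proof
      fix e assume "e \<in> blocked V I A"
      then obtain t where "t < m" "e \<in> Vg t"
          "card (A \<inter> Vg t) = hi t \<or> b \<le> (\<Sum>s<m. max (lo s) (card (A \<inter> Vg s)))"
        by (rule blocked_famI_cases[OF A])
      then show "e \<in> (\<Union>t\<in>?T. Vg t)" using False by blast
    qed
    then have "sum y (blocked V I A) \<le> (\<Sum>t\<in>?T. sum y (Vg t))"
      by (intro sum_le_sum_groups) auto
    then show ?thesis using sum_full_groups_le_card[OF AV] by linarith
  qed
qed

lemma maximal_in_famI_lo_le:
  assumes A: "A \<in> I" and maximal: "\<forall>e\<in>V - A. insert e A \<notin> I" and t: "t < m"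
  shows "lo t \<le> card (A \<inter> Vg t)"
proof (rule ccontr)
  assume less: "\<not> ?thesis"
  then have "card (A \<inter> Vg t) < card (Vg t)" using lo_le_card_group[OF t] by simp
  then have "\<not> Vg t \<subseteq> A" by (metis Int_absorb1 Int_commute less_irrefl)
  then obtain e where e: "e \<in> Vg t" "e \<notin> A" by blast
  have "card (A \<inter> Vg t) < hi t" using less lo_le_hi[OF t] by simp
  with less have "insert e A \<in> I" using insert_in_famI_iff[OF A e t] by simp
  with maximal e Vg_subset[OF t] show False by blast
qed

lemma maximal_in_famI_group_bounds:
  assumes A: "A \<in> I" and maximal: "\<forall>e\<in>V - A. insert e A \<notin> I" and t: "t < m"
  shows "real_of_int \<lfloor>\<alpha> t\<rfloor> \<le> real (card (A \<inter> Vg t))"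
    and "real (card (A \<inter> Vg t)) \<le> real_of_int \<lceil>\<beta> t\<rceil>"
  using maximal_in_famI_lo_le[OF A maximal t] A t unfolding famI_iff
  by (simp_all flip: real_lo[OF t] real_hi[OF t])

end

section \<open>The LP relaxation\<close>

context group_constraints
begin

lemma lp_feasible_marginal:
  assumes "lp_feasible V m Vg \<alpha> \<beta> b x"
  shows "fractional_solution V m Vg \<alpha> \<beta> b (marginal (famF V b) x)"
proof -
  let ?F = "famF V b"
  have F: "?F \<subseteq> Pow V" "finite ?F"
    using finite_V unfolding famF_def by auto
  have x_nonneg: "\<And>S. S \<in> ?F \<Longrightarrow> 0 \<le> x S" and sum_x: "sum x ?F \<le> 1"
    using assms unfolding lp_feasible_def by auto
  have "(\<Sum>S\<in>?F. x S * real (card (S \<inter> V))) \<le> (\<Sum>S\<in>?F. x S * real b)"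
    using x_nonneg by (intro sum_mono mult_left_mono) (auto simp: famF_def Int_absorb2)
  also have "\<dots> \<le> real b"
    using mult_right_mono[OF sum_x, of "real b"] by (simp flip: sum_distrib_right)
  finally have "sum (marginal ?F x) V \<le> real b"
    using sum_marginal[OF F(2) finite_V] by simp
  moreover have "\<alpha> t \<le> sum (marginal ?F x) (Vg t) \<and> sum (marginal ?F x) (Vg t) \<le> \<beta> t" if "t < m" for t
    using assms that sum_marginal[OF F(2) finite_Vg[OF that]] unfolding lp_feasible_def by auto
  moreover have "0 \<le> marginal ?F x e" for e
    unfolding marginal_def using x_nonneg by (auto intro: sum_nonneg)
  moreover have "marginal ?F x e \<le> 1" for e
    using marginal_le_sum[OF x_nonneg F(2)] sum_x by (meson order_trans)
  ultimately show ?thesis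
    by unfold_locales auto
qed

end

lemma lp_obj_nonneg:
  "lp_feasible V m Vg \<alpha> \<beta> b x \<Longrightarrow> \<forall>S\<subseteq>V. 0 \<le> f S \<Longrightarrow> 0 \<le> lp_obj V b f x"
  unfolding lp_obj_def lp_feasible_def famF_def by (auto intro: sum_nonneg)

lemma lp_obj_le_add_marginal_gain:
  assumes mono: "monotone_set_fun V f" and submod: "submodular V f" and finV: "finite V"
    and nonneg: "\<forall>S\<subseteq>V. 0 \<le> f S" and x: "lp_feasible V m Vg \<alpha> \<beta> b x" and A: "A \<subseteq> V"
  shows "lp_obj V b f x \<le> f A + (\<Sum>e\<in>V. marginal (famF V b) x e * gain f A e)"
proof -
  have "lp_obj V b f x \<le> sum x (famF V b) * f A + (\<Sum>e\<in>V. marginal (famF V b) x e * gain f A e)"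
    unfolding lp_obj_def
  proof (rule weighted_sum_le_add_marginal_gain[OF mono submod finV _ _ A])
    show "famF V b \<subseteq> Pow V" unfolding famF_def by auto
    show "\<And>S. S \<in> famF V b \<Longrightarrow> 0 \<le> x S" using x unfolding lp_feasible_def by auto
  qed
  moreover have "sum x (famF V b) * f A \<le> f A"
    using x nonneg A mult_right_mono[of _ 1 "f A"] unfolding lp_feasible_def by simp
  ultimately show ?thesis by linarith
qed

theorem theorem2:
  fixes V :: "'a set" and f :: "'a set \<Rightarrow> real" and m :: nat and Vg :: "nat \<Rightarrow> 'a set"
    and \<alpha> \<beta> :: "nat \<Rightarrow> real" and b :: nat and xopt :: "'a set \<Rightarrow> real" and Ag :: "'a set"
  assumes finV: "finite V"
    and f_nonneg: "\<forall>S\<subseteq>V. 0 \<le> f S"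
    and f_mono: "monotone_set_fun V f"
    and f_submod: "submodular V f"
    and groups_disj: "\<forall>s<m. \<forall>t<m. s \<noteq> t \<longrightarrow> Vg s \<inter> Vg t = {}"
    and groups_cover: "(\<Union>t<m. Vg t) = V"
    and alpha_nonneg: "\<forall>t<m. 0 \<le> \<alpha> t"
    and beta_nonneg: "\<forall>t<m. 0 \<le> \<beta> t"
    and b_pos: "0 < b"
    and opt_feas: "lp_feasible V m Vg \<alpha> \<beta> b xopt"
    and opt_max: "\<forall>x. lp_feasible V m Vg \<alpha> \<beta> b x \<longrightarrow> lp_obj V b f x \<le> lp_obj V b f xopt"
    and greedy: "greedy_output V (famI V m Vg \<alpha> \<beta> b) f Ag"
  shows "card Ag \<le> b \<and>
    (\<forall>t<m. real_of_int \<lfloor>\<alpha> t\<rfloor> \<le> real (card (Ag \<inter> Vg t)) \<and>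
               real (card (Ag \<inter> Vg t)) \<le> real_of_int \<lceil>\<beta> t\<rceil>) \<and>
    f Ag \<ge> (1 - 1 / exp 1)^2 / 2 * lp_obj V b f xopt"
proof -
  interpret group_constraints V m Vg \<alpha> \<beta> b
    by unfold_locales (use assms in auto)
  define y where "y = marginal (famF V b) xopt"
  interpret fractional_solution V m Vg \<alpha> \<beta> b y
    unfolding y_def by (rule lp_feasible_marginal[OF opt_feas])
  have maximal: "\<forall>e\<in>V - Ag. insert e Ag \<notin> I"
    using greedy unfolding greedy_output_def by auto
  have Ag: "Ag \<in> I"
    using greedy greedy_reach_in empty_in_famI unfolding greedy_output_def by blast
  then have AgV: "Ag \<subseteq> V" unfolding famI_iff by simp
  have "(\<Sum>e\<in>V. y e * gain f Ag e) \<le> f Ag - f {}"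
    by (rule greedy_output_sum_gain_le[OF finV famI_down_closed empty_in_famI f_mono f_submod
          y_nonneg sum_blocked_le_card greedy])
  then have "lp_obj V b f xopt \<le> 2 * f Ag"
    using lp_obj_le_add_marginal_gain[OF f_mono f_submod finV f_nonneg opt_feas AgV] f_nonneg
    unfolding y_def by fastforce
  moreover have "(1 - 1 / exp 1)^2 / 2 * lp_obj V b f xopt \<le> 1 / 2 * lp_obj V b f xopt"
    using lp_obj_nonneg[OF opt_feas f_nonneg] by (intro mult_right_mono) (simp_all add: power_le_one)
  ultimately have "(1 - 1 / exp 1)^2 / 2 * lp_obj V b f xopt \<le> f Ag" by linarith
  then show ?thesis
    using famI_card_le[OF Ag] maximal_in_famI_group_bounds[OF Ag maximal] by simp
qed

end
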